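(* Let $G$ be a connected Lie group with Lie algebra $\mathfrak{su}(2)\oplus\mathbb{R}$ having basis $E_1,E_2,E_3,E_4$ with $[E_1,E_2]=E_3$, $[E_2,E_3]=E_1$, $[E_3,E_1]=E_2$, $[E_i,E_4]=0$ ($i=1,2,3$). For $(\alpha_1,\alpha_2,\alpha_3)\in\mathbb{R}^3$, $\beta,t\in\mathbb{R}$ define $$\gamma_1(\alpha_1,\alpha_2,\alpha_3,\beta;t)=\exp\bigl(t(\alpha_1E_1+\alpha_2(E_4-E_3)+\alpha_3E_2+\beta E_3)\bigr)\exp(-t\beta E_3),$$ $$\gamma_2(\alpha_1,\alpha_2,\alpha_3,\beta;t)=\exp\bigl(t(\alpha_1E_1+\alpha_2E_4+\alpha_3E_2+\beta E_3)\bigr)\exp(-t\beta E_3).$$ Then for all $(\alpha_1,\alpha_2,\alpha_3)\in\mathbb{S}^2$, $\beta\in\mathbb{R}$ and $t\in\mathbb{R}$, $$\gamma_1(\alpha_1,\alpha_2,\alpha_3,\beta;t)=\gamma_2(\alpha_1,\alpha_2,\alpha_3,\beta-\alpha_2;t)\exp(-t\alpha_2E_3).$$ *)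

theory Defs
  imports "HOL-Analysis.Analysis" "HOL-Algebra.Group"
begin

text \<open>The Lie algebra su(2) + R, realised on real^4 with coordinates w.r.t. the
basis E1,E2,E3,E4.\<close>

definition E1 :: "real^4" where "E1 = axis 1 1"
definition E2 :: "real^4" where "E2 = axis 2 1"
definition E3 :: "real^4" where "E3 = axis 3 1"
definition E4 :: "real^4" where "E4 = axis 4 1"

text \<open>Bracket determined by [E1,E2]=E3, [E2,E3]=E1, [E3,E1]=E2, [Ei,E4]=0.\<close>
definition su2R_bracket :: "real^4 \<Rightarrow> real^4 \<Rightarrow> real^4" where
  "su2R_bracket X Y = vector
     [X$2 * Y$3 - X$3 * Y$2, X$3 * Y$1 - X$1 * Y$3, X$1 * Y$2 - X$2 * Y$1, 0]"

text \<open>Abstract interface of a Lie group G with Lie algebra su(2)+R and its exponential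
map: expm maps the algebra into G, every line t \<mapsto> expm (t X) is a one-parameter
subgroup, and expm (X+Y) = expm X expm Y for commuting X, Y.\<close>
definition su2R_lie_group_exp ::
  "('g, 'b) monoid_scheme \<Rightarrow> (real^4 \<Rightarrow> 'g) \<Rightarrow> bool" where
  "su2R_lie_group_exp G expm \<longleftrightarrow>
     group G \<and> (\<forall>X. expm X \<in> carrier G) \<and>
     (\<forall>X s t. expm ((s + t) *\<^sub>R X) = expm (s *\<^sub>R X) \<otimes>\<^bsub>G\<^esub> expm (t *\<^sub>R X)) \<and>
     (\<forall>X Y. su2R_bracket X Y = 0 \<longrightarrow> expm (X + Y) = expm X \<otimes>\<^bsub>G\<^esub> expm Y)"

definition gamma1 ::
  "('g, 'b) monoid_scheme \<Rightarrow> (real^4 \<Rightarrow> 'g) \<Rightarrow> real \<Rightarrow> real \<Rightarrow> real \<Rightarrow> real \<Rightarrow> real \<Rightarrow> 'g" where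
  "gamma1 G expm a1 a2 a3 b t =
     expm (t *\<^sub>R (a1 *\<^sub>R E1 + a2 *\<^sub>R (E4 - E3) + a3 *\<^sub>R E2 + b *\<^sub>R E3))
       \<otimes>\<^bsub>G\<^esub> expm ((- t * b) *\<^sub>R E3)"

definition gamma2 ::
  "('g, 'b) monoid_scheme \<Rightarrow> (real^4 \<Rightarrow> 'g) \<Rightarrow> real \<Rightarrow> real \<Rightarrow> real \<Rightarrow> real \<Rightarrow> real \<Rightarrow> 'g" where
  "gamma2 G expm a1 a2 a3 b t =
     expm (t *\<^sub>R (a1 *\<^sub>R E1 + a2 *\<^sub>R E4 + a3 *\<^sub>R E2 + b *\<^sub>R E3))
       \<otimes>\<^bsub>G\<^esub> expm ((- t * b) *\<^sub>R E3)"

end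

theory Submission
  imports Defs
begin

text \<open>Since \<open>\<alpha>\<^sub>2 (E\<^sub>4 - E\<^sub>3) + \<beta> E\<^sub>3 = \<alpha>\<^sub>2 E\<^sub>4 + (\<beta> - \<alpha>\<^sub>2) E\<^sub>3\<close>, both curves start
  with the same exponential factor; the remaining factor \<open>exp (-t\<beta> E\<^sub>3)\<close> of \<open>\<gamma>\<^sub>1\<close>
  splits as \<open>exp (-t(\<beta> - \<alpha>\<^sub>2) E\<^sub>3) exp (-t\<alpha>\<^sub>2 E\<^sub>3)\<close> along the one-parameter subgroup
  of \<open>E\<^sub>3\<close>. The identity holds for all \<open>(\<alpha>\<^sub>1, \<alpha>\<^sub>2, \<alpha>\<^sub>3)\<close>.\<close>

lemma su2R_lie_group_exp_group: "su2R_lie_group_exp G expm \<Longrightarrow> group G"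
  by (simp add: su2R_lie_group_exp_def)

lemma su2R_lie_group_exp_in_carrier: "su2R_lie_group_exp G expm \<Longrightarrow> expm X \<in> carrier G"
  by (simp add: su2R_lie_group_exp_def)

lemma su2R_lie_group_exp_add_scaleR:
  "su2R_lie_group_exp G expm \<Longrightarrow>
     expm ((s + t) *\<^sub>R X) = expm (s *\<^sub>R X) \<otimes>\<^bsub>G\<^esub> expm (t *\<^sub>R X)"
  by (simp add: su2R_lie_group_exp_def)

lemma gamma1_eq_gamma2_shift_mult_exp:
  fixes G (structure)
  assumes lie: "su2R_lie_group_exp G expm"
  shows "gamma1 G expm a1 a2 a3 b t =
         gamma2 G expm a1 a2 a3 (b - a2) t \<otimes>\<^bsub>G\<^esub> expm ((- t * a2) *\<^sub>R E3)"
proof -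
  interpret group G
    using lie by (rule su2R_lie_group_exp_group)
  define V where "V = t *\<^sub>R (a1 *\<^sub>R E1 + a2 *\<^sub>R E4 + a3 *\<^sub>R E2 + (b - a2) *\<^sub>R E3)"
  have "gamma1 G expm a1 a2 a3 b t = expm V \<otimes> expm ((- t * b) *\<^sub>R E3)"
    unfolding gamma1_def V_def by (simp add: algebra_simps)
  also have "expm ((- t * b) *\<^sub>R E3) =
             expm ((- t * (b - a2)) *\<^sub>R E3) \<otimes> expm ((- t * a2) *\<^sub>R E3)"
    using su2R_lie_group_exp_add_scaleR[OF lie, of "- t * (b - a2)" "- t * a2" E3]
    by (simp add: algebra_simps)
  also have "expm V \<otimes> (expm ((- t * (b - a2)) *\<^sub>R E3) \<otimes> expm ((- t * a2) *\<^sub>R E3)) =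
             (expm V \<otimes> expm ((- t * (b - a2)) *\<^sub>R E3)) \<otimes> expm ((- t * a2) *\<^sub>R E3)"
    using su2R_lie_group_exp_in_carrier[OF lie] by (simp add: m_assoc)
  also have "expm V \<otimes> expm ((- t * (b - a2)) *\<^sub>R E3) = gamma2 G expm a1 a2 a3 (b - a2) t"
    unfolding gamma2_def V_def ..
  finally show ?thesis .
qed

theorem proposition1:
  fixes G :: "('g, 'b) monoid_scheme" and expm :: "real^4 \<Rightarrow> 'g"
    and a1 a2 a3 b t :: real
  assumes "su2R_lie_group_exp G expm"
    and "a1\<^sup>2 + a2\<^sup>2 + a3\<^sup>2 = 1"
  shows "gamma1 G expm a1 a2 a3 b t =
         gamma2 G expm a1 a2 a3 (b - a2) t \<otimes>\<^bsub>G\<^esub> expm ((- t * a2) *\<^sub>R E3)"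
  using assms(1) by (rule gamma1_eq_gamma2_shift_mult_exp)

end
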